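(* Let $l\ge3$ be an integer and $x_1,\dots,x_l$ pairwise distinct real numbers, and set $a_{m,n}=\frac{1}{x_m-x_n}$ for $m\ne n$. Denoting by $\mathcal{S}_l$ the set of permutations of $\{1,\dots,l\}$, $$\sum_{\sigma\in\mathcal{S}_l} a_{\sigma(1),\sigma(2)}\,a_{\sigma(2),\sigma(3)}\cdots a_{\sigma(l-1),\sigma(l)}\,a_{\sigma(l),\sigma(1)}=0.$$ *)

theory Defs
  imports Complex_Main "HOL-Combinatorics.Permutations"
begin

end

theory Submission
  imports Defs "HOL-Combinatorics.Multiset_Permutations"
begin

text \<open>Write the sum over permutations as a sum of cyclic products
  a(y1,y2) a(y2,y3) ... a(yn,y1), with a = inv_diff x, over all arrangements y1 ... yn
  (distinct lists) of the index set S. Fix v in S and group the arrangements not starting with v by what remains after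
  deleting v. Inserting v between cyclic neighbours p, s multiplies the cyclic product by
  a(p,v) + a(v,s), since a(p,v) a(v,s) = (a(p,v) + a(v,s)) a(p,s); summed over all gaps these
  factors cancel by antisymmetry, so each group contributes 0. Thus for every v the
  arrangements starting with v already sum to the total T, and summing over v gives
  T = |S| T, i.e. T = 0.\<close>

definition inv_diff :: "('a \<Rightarrow> 'b::field) \<Rightarrow> 'a \<Rightarrow> 'a \<Rightarrow> 'b" where
  "inv_diff x u v = 1 / (x u - x v)"

fun path_prod :: "('a \<Rightarrow> 'b::field) \<Rightarrow> 'a list \<Rightarrow> 'b" where
  "path_prod x (u # v # ws) = inv_diff x u v * path_prod x (v # ws)"
| "path_prod x _ = 1"

definition cycle_prod :: "('a \<Rightarrow> 'b::field) \<Rightarrow> 'a list \<Rightarrow> 'b" where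
  "cycle_prod x xs = path_prod x (xs @ [hd xs])"

lemma inv_diff_swap: "inv_diff x v u = - inv_diff x u v"
  by (simp add: inv_diff_def minus_divide_right)

lemma inv_diff_mult_inv_diff:
  assumes "x u \<noteq> x v" "x v \<noteq> x w" "x u \<noteq> x w"
  shows "inv_diff x u v * inv_diff x v w = (inv_diff x u v + inv_diff x v w) * inv_diff x u w"
  using assms by (simp add: inv_diff_def field_simps)

lemma path_prod_append:
  "path_prod x (us @ v # w # ws) = path_prod x (us @ [v]) * path_prod x (v # w # ws)"
proof (induction us)
  case (Cons u us)
  then show ?case by (cases us) auto
qed simp

lemma path_prod_conv_nth:
  "path_prod x zs = (\<Prod>i < length zs - 1. inv_diff x (zs ! i) (zs ! Suc i))"
  by (induction x zs rule: path_prod.induct)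
     (simp_all del: prod.lessThan_Suc add: prod.lessThan_Suc_shift)

lemma path_prod_insert:
  assumes "us \<noteq> []" "zs \<noteq> []"
    and "x (last us) \<noteq> x v" "x v \<noteq> x (hd zs)" "x (last us) \<noteq> x (hd zs)"
  shows "path_prod x (us @ v # zs) =
           (inv_diff x (last us) v + inv_diff x v (hd zs)) * path_prod x (us @ zs)"
proof -
  obtain us' u where us: "us = us' @ [u]" using \<open>us \<noteq> []\<close> by (cases us rule: rev_cases) auto
  obtain z zs' where zs: "zs = z # zs'" using \<open>zs \<noteq> []\<close> by (cases zs) auto
  have "path_prod x (us @ v # zs) =
          path_prod x us * (inv_diff x u v * inv_diff x v z) * path_prod x zs"
    by (simp add: us zs path_prod_append)
  moreover have "path_prod x (us @ zs) = path_prod x us * inv_diff x u z * path_prod x zs"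
    by (simp add: us zs path_prod_append)
  moreover have "inv_diff x u v * inv_diff x v z = (inv_diff x u v + inv_diff x v z) * inv_diff x u z"
    using assms by (intro inv_diff_mult_inv_diff) (simp_all add: us zs)
  ultimately show ?thesis
    by (simp add: us zs)
qed

lemma nth_rotate1_neq:
  assumes "distinct ys" "length ys \<ge> 2" "k < length ys"
  shows "rotate1 ys ! k \<noteq> ys ! k"
proof -
  have "Suc k mod length ys \<noteq> k"
  proof (cases "Suc k < length ys")
    case False
    then have "Suc k = length ys" using assms(3) by simp
    then show ?thesis using assms(2) by simp
  qed simp
  moreover have "Suc k mod length ys < length ys"
    using assms(3) by (intro mod_less_divisor) linarith
  ultimately show ?thesis
    using assms by (simp add: nth_rotate1 nth_eq_iff_index_eq)
qed

lemma cycle_prod_insert: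
  assumes "distinct ys" "length ys \<ge> 2" "k < length ys"
    and "v \<notin> set ys" "inj_on x (insert v (set ys))"
  shows "cycle_prod x (take (Suc k) ys @ v # drop (Suc k) ys) =
           (inv_diff x (ys ! k) v + inv_diff x v (rotate1 ys ! k)) * cycle_prod x ys"
proof -
  define us where "us = take (Suc k) ys"
  define zs where "zs = drop k (rotate1 ys)"
  have "ys \<noteq> []" using assms(3) by auto
  have us: "us \<noteq> []" "last us = ys ! k"
    using assms(3) by (simp_all add: us_def take_Suc_conv_app_nth)
  have zs_eq: "zs = drop (Suc k) ys @ [hd ys]"
    using assms(3) \<open>ys \<noteq> []\<close> by (simp add: zs_def rotate1_hd_tl drop_Suc)
  have zs: "zs \<noteq> []" "hd zs = rotate1 ys ! k"
    using assms(3) by (simp add: zs_eq) (simp add: zs_def hd_drop_conv_nth assms(3))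
  have "cycle_prod x (us @ v # drop (Suc k) ys) = path_prod x (us @ v # zs)"
    using us by (simp add: cycle_prod_def zs_eq us_def)
  also have "\<dots> = (inv_diff x (ys ! k) v + inv_diff x v (rotate1 ys ! k)) * path_prod x (us @ zs)"
  proof -
    have "ys ! k \<in> set ys" "rotate1 ys ! k \<in> set ys"
      using assms(3) nth_mem[of k "rotate1 ys"] by simp_all
    then have "x (ys ! k) \<noteq> x v" "x v \<noteq> x (rotate1 ys ! k)" "x (ys ! k) \<noteq> x (rotate1 ys ! k)"
      using nth_rotate1_neq[OF assms(1-3)] assms(4) inj_on_contraD[OF assms(5)] by (metis insertCI)+
    then show ?thesis
      using path_prod_insert[OF us(1) zs(1)] by (simp add: us(2) zs(2))
  qed
  also have "path_prod x (us @ zs) = cycle_prod x ys"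
    by (simp only: cycle_prod_def zs_eq us_def append_assoc[symmetric] append_take_drop_id)
  finally show ?thesis by (simp add: us_def)
qed

lemma sum_nth_rotate1:
  "(\<Sum>k<length xs. f (rotate1 xs ! k)) = (\<Sum>k<length xs. f (xs ! k) :: 'b::comm_monoid_add)"
proof -
  have sum_nth: "(\<Sum>k<length ys. f (ys ! k)) = sum_list (map f ys)" for ys
    by (simp add: sum_list_sum_nth atLeast0LessThan)
  show ?thesis
    using sum_nth[of "rotate1 xs"] sum_nth[of xs] by (cases xs) (simp_all add: add.commute)
qed

lemma sum_cycle_prod_insert:
  assumes "distinct ys" "length ys \<ge> 2" "v \<notin> set ys" "inj_on x (insert v (set ys))"
  shows "(\<Sum>k<length ys. cycle_prod x (take (Suc k) ys @ v # drop (Suc k) ys)) = 0"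
proof -
  have "(\<Sum>k<length ys. cycle_prod x (take (Suc k) ys @ v # drop (Suc k) ys)) =
          ((\<Sum>k<length ys. inv_diff x (ys ! k) v) + (\<Sum>k<length ys. inv_diff x v (rotate1 ys ! k)))
          * cycle_prod x ys"
    using assms by (simp add: cycle_prod_insert sum.distrib flip: sum_distrib_right)
  also have "(\<Sum>k<length ys. inv_diff x v (rotate1 ys ! k)) = - (\<Sum>k<length ys. inv_diff x (ys ! k) v)"
    using sum_nth_rotate1[of "\<lambda>u. inv_diff x u v" ys] by (simp add: inv_diff_swap[of x v] sum_negf)
  finally show ?thesis by simp
qed

lemma takeWhile_insert:
  assumes "v \<notin> set ys"
  shows "takeWhile (\<lambda>z. z \<noteq> v) (take k ys @ v # drop k ys) = take k ys"
proof -
  have "z \<noteq> v" if "z \<in> set (take k ys)" for z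
    using assms in_set_takeD that by fastforce
  then show ?thesis by (simp add: takeWhile_append2)
qed

lemma bij_betw_insert_permutations_of_set:
  assumes ys: "ys \<in> permutations_of_set (S - {v})" and "v \<in> S"
  shows "bij_betw (\<lambda>k. take (Suc k) ys @ v # drop (Suc k) ys) {..<length ys}
           {xs \<in> permutations_of_set S. hd xs \<noteq> v \<and> remove1 v xs = ys}"
proof (rule bij_betw_imageI)
  have ys': "distinct ys" "set ys = S - {v}" "v \<notin> set ys"
    using ys by (auto simp: permutations_of_set_def)
  show "inj_on (\<lambda>k. take (Suc k) ys @ v # drop (Suc k) ys) {..<length ys}"
  proof (rule inj_onI)
    fix i j assume "i \<in> {..<length ys}" "j \<in> {..<length ys}"
      and "take (Suc i) ys @ v # drop (Suc i) ys = take (Suc j) ys @ v # drop (Suc j) ys"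
    then have "take (Suc i) ys = take (Suc j) ys"
      using takeWhile_insert[OF ys'(3)] by metis
    then show "i = j"
      using \<open>i \<in> _\<close> \<open>j \<in> _\<close> by (metis Suc_leI lessThan_iff length_take min.absorb2 nat.inject)
  qed
  show "(\<lambda>k. take (Suc k) ys @ v # drop (Suc k) ys) ` {..<length ys} =
          {xs \<in> permutations_of_set S. hd xs \<noteq> v \<and> remove1 v xs = ys}"
  proof (intro equalityI subsetI)
    fix xs assume "xs \<in> (\<lambda>k. take (Suc k) ys @ v # drop (Suc k) ys) ` {..<length ys}"
    then obtain k where k: "k < length ys" and xs: "xs = take (Suc k) ys @ v # drop (Suc k) ys"
      by blast
    define us ws where "us = take (Suc k) ys" and "ws = drop (Suc k) ys"
    have "us \<noteq> []" "ys = us @ ws"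
      using k by (cases ys) (auto simp: us_def ws_def)
    then show "xs \<in> {xs \<in> permutations_of_set S. hd xs \<noteq> v \<and> remove1 v xs = ys}"
      using ys' \<open>v \<in> S\<close> hd_in_set[of us] unfolding xs us_def[symmetric] ws_def[symmetric]
      by (auto simp: permutations_of_set_def remove1_append)
  next
    fix xs assume "xs \<in> {xs \<in> permutations_of_set S. hd xs \<noteq> v \<and> remove1 v xs = ys}"
    then have xs: "distinct xs" "set xs = S" "hd xs \<noteq> v" "remove1 v xs = ys"
      by (auto simp: permutations_of_set_def)
    obtain us ws where split: "xs = us @ v # ws" "v \<notin> set us"
      using split_list_first[of v xs] xs(2) \<open>v \<in> S\<close> by blast
    have "ys = us @ ws"
      using xs(4) split by (simp add: remove1_append)
    moreover obtain k where "length us = Suc k"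
      using xs(3) split(1) by (cases us) auto
    ultimately show "xs \<in> (\<lambda>k. take (Suc k) ys @ v # drop (Suc k) ys) ` {..<length ys}"
      using split(1) by (intro image_eqI[of _ _ k]) auto
  qed
qed

lemma sum_cycle_prod_hd_neq:
  assumes "finite S" "v \<in> S" "card S \<ge> 3" "inj_on x S"
  shows "(\<Sum>xs | xs \<in> permutations_of_set S \<and> hd xs \<noteq> v. cycle_prod x xs) = 0"
proof -
  let ?F = "{xs \<in> permutations_of_set S. hd xs \<noteq> v}"
  have "(\<Sum>xs\<in>?F. cycle_prod x xs) =
          (\<Sum>ys\<in>permutations_of_set (S - {v}). \<Sum>xs\<in>{xs \<in> ?F. remove1 v xs = ys}. cycle_prod x xs)"
    by (rule sum.group[symmetric])
       (simp_all, auto intro!: permutations_of_setI simp: set_remove1_eq permutations_of_set_def)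
  also have "\<dots> = 0"
  proof (rule sum.neutral, rule ballI)
    fix ys assume ys: "ys \<in> permutations_of_set (S - {v})"
    then have "distinct ys" "set ys = S - {v}" "v \<notin> set ys"
      by (auto simp: permutations_of_set_def)
    moreover have "length ys \<ge> 2"
      using ys assms(1-3) by (simp add: length_finite_permutations_of_set)
    moreover have "inj_on x (insert v (set ys))"
      using \<open>set ys = S - {v}\<close> assms(2,4) by (simp add: insert_absorb)
    ultimately have "(\<Sum>k<length ys. cycle_prod x (take (Suc k) ys @ v # drop (Suc k) ys)) = 0"
      by (intro sum_cycle_prod_insert)
    then show "(\<Sum>xs\<in>{xs \<in> ?F. remove1 v xs = ys}. cycle_prod x xs) = 0"
      using sum.reindex_bij_betw[OF bij_betw_insert_permutations_of_set[OF ys assms(2)], of "cycle_prod x"]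
      by (simp add: conj_assoc)
  qed
  finally show ?thesis by simp
qed

lemma sum_cycle_prod_permutations_of_set:
  fixes x :: "'a \<Rightarrow> 'b::field_char_0"
  assumes "finite S" "card S \<ge> 3" "inj_on x S"
  shows "(\<Sum>xs\<in>permutations_of_set S. cycle_prod x xs) = 0"
proof -
  let ?T = "\<Sum>xs\<in>permutations_of_set S. cycle_prod x xs"
  have hd_eq: "(\<Sum>xs | xs \<in> permutations_of_set S \<and> hd xs = v. cycle_prod x xs) = ?T"
    if "v \<in> S" for v
    using sum.If_cases[of "permutations_of_set S" "\<lambda>xs. hd xs = v" "cycle_prod x" "cycle_prod x"]
      sum_cycle_prod_hd_neq[OF assms(1) that assms(2,3)]
    by (simp add: Int_def Collect_neg_eq[symmetric] conj_commute)
  have "hd xs \<in> S" if "xs \<in> permutations_of_set S" for xs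
  proof -
    have "S \<noteq> {}" using assms(2) by auto
    then show ?thesis using that hd_in_set[of xs] by (auto simp: permutations_of_set_def)
  qed
  then have "?T = (\<Sum>v\<in>S. \<Sum>xs | xs \<in> permutations_of_set S \<and> hd xs = v. cycle_prod x xs)"
    using assms(1) by (intro sum.group[symmetric]) auto
  also have "\<dots> = of_nat (card S) * ?T"
    by (simp add: hd_eq)
  finally have "(of_nat (card S) - 1) * ?T = 0"
    by (simp add: algebra_simps)
  moreover have "of_nat (card S) - 1 \<noteq> (0 :: 'b)"
    using assms(2) by simp
  ultimately show ?thesis by simp
qed

lemma bij_betw_map_permutes:
  assumes "distinct xs"
  shows "bij_betw (\<lambda>\<sigma>. map \<sigma> xs) {\<sigma>. \<sigma> permutes set xs} (permutations_of_set (set xs))"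
proof -
  have inj: "inj_on (\<lambda>\<sigma>. map \<sigma> xs) {\<sigma>. \<sigma> permutes set xs}"
  proof (rule inj_onI)
    fix \<sigma> \<tau> assume "\<sigma> \<in> {\<sigma>. \<sigma> permutes set xs}" "\<tau> \<in> {\<sigma>. \<sigma> permutes set xs}"
      and "map \<sigma> xs = map \<tau> xs"
    then show "\<sigma> = \<tau>"
      by (metis map_eq_conv mem_Collect_eq permutes_not_in ext)
  qed
  have sub: "(\<lambda>\<sigma>. map \<sigma> xs) ` {\<sigma>. \<sigma> permutes set xs} \<subseteq> permutations_of_set (set xs)"
    using permutations_of_set_image_permutes assms by (blast intro: permutations_of_setI)
  have "card ((\<lambda>\<sigma>. map \<sigma> xs) ` {\<sigma>. \<sigma> permutes set xs}) = card (permutations_of_set (set xs))"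
    by (simp add: card_image[OF inj] card_permutations)
  then show ?thesis
    using inj sub by (simp add: bij_betw_def card_subset_eq)
qed

lemma cycle_prod_conv_nth:
  assumes "xs \<noteq> []"
  shows "cycle_prod x xs = (\<Prod>i<length xs. inv_diff x (xs ! i) (xs ! (Suc i mod length xs)))"
proof -
  have "(xs @ [hd xs]) ! Suc i = xs ! (Suc i mod length xs)" if "i < length xs" for i
  proof (cases "Suc i < length xs")
    case False
    then have "Suc i = length xs" using that by simp
    then show ?thesis using assms by (simp add: hd_conv_nth)
  qed (simp add: nth_append)
  then show ?thesis
    by (simp add: cycle_prod_def path_prod_conv_nth nth_append)
qed

lemma prod_cyclic_eq_cycle_prod:
  assumes "l \<ge> 1"
  shows "(\<Prod>i = 1..l. inv_diff x (\<sigma> i) (\<sigma> (if i = l then 1 else i + 1))) =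
           cycle_prod x (map \<sigma> [1..<Suc l])"
proof -
  have "Suc (Suc k mod l) = (if Suc k = l then 1 else Suc k + 1)" if "k < l" for k
    using that by auto
  then show ?thesis
    using assms by (simp add: cycle_prod_conv_nth prod.atLeast1_atMost_eq del: upt_Suc)
qed

theorem lemma4:
  fixes l :: nat and x :: "nat \<Rightarrow> real"
  assumes "l \<ge> 3"
    and "inj_on x {1..l}"
  shows "(\<Sum>\<sigma> | \<sigma> permutes {1..l}.
           \<Prod>i = 1..l. 1 / (x (\<sigma> i) - x (\<sigma> (if i = l then 1 else i + 1)))) = 0"
proof -
  note bij = bij_betw_map_permutes[OF distinct_upt[of 1 "Suc l"],
      unfolded set_upt atLeastLessThanSuc_atLeastAtMost]
  have "(\<Sum>\<sigma> | \<sigma> permutes {1..l}.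
           \<Prod>i = 1..l. 1 / (x (\<sigma> i) - x (\<sigma> (if i = l then 1 else i + 1)))) =
        (\<Sum>\<sigma> | \<sigma> permutes {1..l}. cycle_prod x (map \<sigma> [1..<Suc l]))"
    using assms(1) by (intro sum.cong refl prod_cyclic_eq_cycle_prod[unfolded inv_diff_def]) simp
  also have "\<dots> = (\<Sum>xs\<in>permutations_of_set {1..l}. cycle_prod x xs)"
    by (rule sum.reindex_bij_betw[OF bij])
  also have "\<dots> = 0"
    using assms by (intro sum_cycle_prod_permutations_of_set) auto
  finally show ?thesis .
qed

end
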